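(* There is an absolute constant $C_2>0$ such that for all $0<u,\tau<1$ the following holds. Let $X,Y$ be finite sets, $Z\subset X\times Y$, and let $\mathsf P_X,\mathsf P_Y$ be partitions of $X$ and $Y$. Let $$E=\Big\{(p_x,p_y)\in\mathsf P_X\times\mathsf P_Y\,:\,\big\|Z-\mathbb P(Z\,:\,p_x\times p_y)\big\|_{\Box^{x,y}(p_x\times p_y)}\ge u\Big\},$$ and suppose $\mathbb P\big(\bigcup_{(p_x,p_y)\in E}p_x\times p_y\,:\,X\times Y\big)\ge\tau$. Then there are partitions $\mathsf P'_X$ of $X$ and $\mathsf P'_Y$ of $Y$ such that (i) $\mathsf P'_X\times\mathsf P'_Y$ refines $\mathsf P_X\times\mathsf P_Y$ and $\mathbb E\big[\mathbb E(Z:\mathsf P'_X\times\mathsf P'_Y)^2\big]\ge\mathbb E\big[\mathbb E(Z:\mathsf P_X\times\mathsf P_Y)^2\big]+\tau u^{C_2}$; (ii) $\operatorname{multi}(\mathsf P'_X:\mathsf P_X)\le 2^{\#\mathsf P_Y}$ and $\operatorname{multi}(\mathsf P'_Y:\mathsf P_Y)\le 2^{\#\mathsf P_X}$.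
   Context: Sets are identified with indicator functions; $X\times Y$ carries the uniform probability measure, and $\mathbb P(Z:p_x\times p_y)=|Z\cap(p_x\times p_y)|/(|p_x||p_y|)$. For finite sets $P,Q$ and $f:P\times Q\to\mathbb R$, $\|f\|_{\Box^{x,y}(P\times Q)}^4=\mathbb E_{x,x'\in P,\,y,y'\in Q}f(x,y)f(x,y')f(x',y)f(x',y')$; here $Z$ is restricted to $p_x\times p_y$. For a partition $\mathsf P$ of $X\times Y$, $\mathbb E(Z:\mathsf P)=\sum_{p\in\mathsf P}\mathbf 1_p\,|Z\cap p|/|p|$, and $\mathsf P'_X\times\mathsf P'_Y=\{a\times b:a\in\mathsf P'_X,b\in\mathsf P'_Y\}$. A partition $\mathsf P'$ refines $\mathsf P$ if every atom of $\mathsf P$ is a union of atoms of $\mathsf P'$. For a partition $\mathsf P'$ subordinate to $\mathsf P$ (every atom of $\mathsf P'$ lies in an atom of $\mathsf P$), $\operatorname{multi}(\mathsf P':\mathsf P)=\max_{p\in\mathsf P}\#\{p'\in\mathsf P':p'\subset p\}$. *)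

theory Defs
  imports Complex_Main "HOL-Library.Disjoint_Sets" "HOL-Library.Indicator_Function"
begin

definition rel_prob :: "('a \<times> 'b) set \<Rightarrow> ('a \<times> 'b) set \<Rightarrow> real" where
  "rel_prob Z A = real (card (Z \<inter> A)) / real (card A)"

definition box_norm :: "'a set \<Rightarrow> 'b set \<Rightarrow> ('a \<Rightarrow> 'b \<Rightarrow> real) \<Rightarrow> real" where
  "box_norm P Q f = root 4
     ((\<Sum>x\<in>P. \<Sum>x'\<in>P. \<Sum>y\<in>Q. \<Sum>y'\<in>Q. f x y * f x y' * f x' y * f x' y')
       / (real (card P) ^ 2 * real (card Q) ^ 2))"

definition prod_part :: "'a set set \<Rightarrow> 'b set set \<Rightarrow> ('a \<times> 'b) set set" where
  "prod_part PX PY = {a \<times> b | a b. a \<in> PX \<and> b \<in> PY}"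

definition cond_exp :: "('a \<times> 'b) set \<Rightarrow> ('a \<times> 'b) set set \<Rightarrow> ('a \<times> 'b) \<Rightarrow> real" where
  "cond_exp Z P z = (\<Sum>p\<in>P. indicator p z * (real (card (Z \<inter> p)) / real (card p)))"

definition uexp :: "'c set \<Rightarrow> ('c \<Rightarrow> real) \<Rightarrow> real" where
  "uexp A f = (\<Sum>z\<in>A. f z) / real (card A)"

definition refines :: "'c set set \<Rightarrow> 'c set set \<Rightarrow> bool" where
  "refines P' P \<longleftrightarrow> (\<forall>p\<in>P. \<exists>S\<subseteq>P'. p = \<Union>S)"

definition multi :: "'c set set \<Rightarrow> 'c set set \<Rightarrow> nat" where
  "multi P' P = Max ((\<lambda>p. card {p'\<in>P'. p' \<subseteq> p}) ` P)"

end

theory Submission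
  imports Defs "HOL-Analysis.Convex"
begin

text \<open>
  On a cell a \<times> b of PX \<times> PY write f = 1_Z - \<delta>, with \<delta> the density of Z on the cell.
  If the box norm of f is at least u, averaging its fourth power yields a witness
  (x0, y0) \<in> a \<times> b with \<Sum>x\<in>a. \<Sum>y\<in>b. f(x,y) f(x,y0) f(x0,y) f(x0,y0) \<ge> |a| |b| u^4.
  Cut every atom a according to the set of atoms b with (x, y0(a,b)) \<in> Z, and every atom b
  likewise along the witness columns x0(a,b); this creates at most 2^|PY| resp. 2^|PX| pieces
  per atom. The test function \<phi>(x,y) = f(x,y0) f(x0,y) f(x0,y0) on a \<times> b is then constant on
  the new cells, so 1_Z - E(Z : P') is orthogonal to it, and the correlation above is also the
  correlation of E(Z : P') - E(Z : P) with \<phi>. Since |\<phi>| \<le> 1, Cauchy-Schwarz gives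
  \<Sum>(E(Z : P') - E(Z : P))^2 \<ge> |a| |b| u^8 over the cell. These cells cover a \<tau>-fraction of
  X \<times> Y, and Pythagoras for nested conditional expectations turns this into the energy
  increment \<tau> u^8; so C2 = 8.
\<close>

text \<open>
  Besides the paper's \<open>refines P' P\<close> (every atom of \<open>P\<close> is a union of atoms of \<open>P'\<close>) we use
  the library's \<open>Disjoint_Sets.refines S P' P\<close>: both partition \<open>S\<close> and every atom of \<open>P'\<close>
  lies in an atom of \<open>P\<close>.
\<close>

lemma refines_if_partition_refines:
  assumes "Disjoint_Sets.refines A P' P"
  shows "refines P' P"
  unfolding refines_def
proof
  fix p assume "p \<in> P"
  then have "p = \<Union>{q \<in> P'. q \<subseteq> p}"
    using partition_onD1[OF refines_obtains_subset[OF assms]] by simp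
  then show "\<exists>S\<subseteq>P'. p = \<Union>S" by (intro exI[of _ "{q \<in> P'. q \<subseteq> p}"]) auto
qed

lemma partition_on_prod_part:
  assumes "partition_on X PX" "partition_on Y PY"
  shows "partition_on (X \<times> Y) (prod_part PX PY)"
proof (rule partition_onI)
  show "\<Union>(prod_part PX PY) = X \<times> Y"
    using partition_onD1[OF assms(1)] partition_onD1[OF assms(2)]
    unfolding prod_part_def by blast
  show "{} \<notin> prod_part PX PY"
    using partition_onD3[OF assms(1)] partition_onD3[OF assms(2)]
    unfolding prod_part_def by auto (metis Times_empty)
next
  fix p q assume "p \<in> prod_part PX PY" "q \<in> prod_part PX PY" "p \<noteq> q"
  then obtain a b a' b' where ab: "p = a \<times> b" "q = a' \<times> b'" "a \<in> PX" "b \<in> PY" "a' \<in> PX" "b' \<in> PY"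
    unfolding prod_part_def by blast
  with \<open>p \<noteq> q\<close> have "a \<inter> a' = {} \<or> b \<inter> b' = {}"
    using partition_onD2[OF assms(1)] partition_onD2[OF assms(2)] by (metis disjointD)
  then show "disjnt p q" using ab by (auto simp: disjnt_def)
qed

lemma partition_refines_prod_part:
  assumes "Disjoint_Sets.refines X PX' PX" "Disjoint_Sets.refines Y PY' PY"
  shows "Disjoint_Sets.refines (X \<times> Y) (prod_part PX' PY') (prod_part PX PY)"
proof -
  have "\<exists>d\<in>prod_part PX PY. c \<subseteq> d" if "c \<in> prod_part PX' PY'" for c
  proof -
    obtain a b where c: "c = a \<times> b" "a \<in> PX'" "b \<in> PY'"
      using \<open>c \<in> prod_part PX' PY'\<close> unfolding prod_part_def by blast
    then obtain a' b' where "a' \<in> PX" "a \<subseteq> a'" "b' \<in> PY" "b \<subseteq> b'"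
      using assms unfolding Disjoint_Sets.refines_def by meson
    then show ?thesis using c unfolding prod_part_def by blast
  qed
  then show ?thesis
    using assms unfolding Disjoint_Sets.refines_def by (simp add: partition_on_prod_part)
qed

lemma partition_refines_mem:
  assumes "Disjoint_Sets.refines A P' P" "q \<in> P'" "x \<in> q" "x' \<in> q" "p \<in> P" "x \<in> p"
  shows "x' \<in> p"
proof -
  obtain p' where p': "p' \<in> P" "q \<subseteq> p'"
    using assms(1,2) unfolding Disjoint_Sets.refines_def by blast
  have "disjoint P"
    using assms(1) partition_onD2 unfolding Disjoint_Sets.refines_def by blast
  moreover have "x \<in> p' \<inter> p" using assms(3,6) p' by blast
  ultimately have "p' = p" using disjointD[OF _ p'(1) assms(5)] by blast
  with p' show ?thesis using assms(4) by blast
qed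

lemma partition_on_finite_atom: "finite S \<Longrightarrow> partition_on S P \<Longrightarrow> p \<in> P \<Longrightarrow> finite p"
  by (metis Union_upper finite_subset partition_onD1)

lemma rel_prob_nonneg: "0 \<le> rel_prob Z A"
  by (simp add: rel_prob_def)

lemma rel_prob_le_1: "finite A \<Longrightarrow> rel_prob Z A \<le> 1"
  unfolding rel_prob_def by (cases "A = {}") (auto simp: divide_le_eq_1 card_mono card_gt_0_iff)

lemma card_ge_of_rel_prob_ge:
  assumes "0 < \<tau>" "U \<subseteq> A" "\<tau> \<le> rel_prob U A"
  shows "0 < card A" "\<tau> * card A \<le> card U"
proof -
  have "\<tau> \<le> real (card U) / real (card A)"
    using assms(2,3) unfolding rel_prob_def by (simp add: Int_absorb2)
  then show "0 < card A" "\<tau> * card A \<le> card U"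
    using assms(1) by (auto simp: le_divide_eq split: if_splits)
qed

lemma cond_exp_eq_rel_prob:
  assumes S: "finite S" and P: "partition_on S P" and p: "p \<in> P" "z \<in> p"
  shows "cond_exp Z P z = rel_prob Z p"
proof -
  have "indicator q z = (0::real)" if q: "q \<in> P - {p}" for q
  proof -
    have "q \<inter> p = {}" using q disjointD[OF partition_onD2[OF P]] p(1) by blast
    then have "z \<notin> q" using p(2) by blast
    then show ?thesis by simp
  qed
  then show ?thesis
    unfolding cond_exp_def rel_prob_def using finite_elements[OF S P] p by (simp add: sum.remove)
qed

lemma sum_cond_exp_residual_eq_0:
  assumes S: "finite S" and P: "partition_on S P"
    and const: "\<And>p z z'. p \<in> P \<Longrightarrow> z \<in> p \<Longrightarrow> z' \<in> p \<Longrightarrow> \<phi> z = \<phi> z'"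
  shows "(\<Sum>z\<in>S. (indicator Z z - cond_exp Z P z) * \<phi> z) = 0"
proof -
  have "(\<Sum>z\<in>p. (indicator Z z - cond_exp Z P z) * \<phi> z) = 0" if p: "p \<in> P" for p
  proof -
    have fin: "finite p" by (rule partition_on_finite_atom[OF S P p])
    obtain z0 where z0: "z0 \<in> p" using p P by (metis equals0I partition_onD3)
    have "(\<Sum>z\<in>p. (indicator Z z - cond_exp Z P z) * \<phi> z)
        = ((\<Sum>z\<in>p. indicator Z z) - card p * rel_prob Z p) * \<phi> z0"
      using cond_exp_eq_rel_prob[OF S P p] const[OF p _ z0]
      by (simp add: sum_distrib_right[symmetric] sum_subtractf)
    also have "(\<Sum>z\<in>p. indicator Z z) = real (card (Z \<inter> p))"
      using fin by (simp add: indicator_def sum.If_cases Int_commute)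
    finally show ?thesis
      using fin z0 by (auto simp: rel_prob_def card_gt_0_iff)
  qed
  then show ?thesis
    by (simp add: sum.partition[OF S P])
qed

lemma cond_exp_pythagoras:
  assumes S: "finite S" and ref: "Disjoint_Sets.refines S P' P"
  shows "(\<Sum>z\<in>S. (cond_exp Z P' z)\<^sup>2)
       = (\<Sum>z\<in>S. (cond_exp Z P z)\<^sup>2) + (\<Sum>z\<in>S. (cond_exp Z P' z - cond_exp Z P z)\<^sup>2)"
proof -
  have P: "partition_on S P" and P': "partition_on S P'"
    using ref unfolding Disjoint_Sets.refines_def by auto
  define e where "e = cond_exp Z P"
  define e' where "e' = cond_exp Z P'"
  have e_const: "e z = e z'" if "p \<in> P" "z \<in> p" "z' \<in> p" for p z z'
    using cond_exp_eq_rel_prob[OF S P that(1)] that(2,3) unfolding e_def by simp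
  have e_const': "e z = e z'" if q: "q \<in> P'" "z \<in> q" "z' \<in> q" for q z z'
  proof -
    obtain p where "p \<in> P" "q \<subseteq> p" using ref q(1) unfolding Disjoint_Sets.refines_def by blast
    then show ?thesis using e_const q(2,3) by blast
  qed
  have orth: "(\<Sum>z\<in>S. (indicator Z z - e' z) * e z) = 0"
    unfolding e'_def by (rule sum_cond_exp_residual_eq_0[OF S P' e_const'])
  have orth': "(\<Sum>z\<in>S. (indicator Z z - e z) * e z) = 0"
    unfolding e_def by (rule sum_cond_exp_residual_eq_0[OF S P e_const[unfolded e_def]])
  have "(\<Sum>z\<in>S. (e' z - e z)\<^sup>2) = (\<Sum>z\<in>S. (e' z)\<^sup>2 - (e z)\<^sup>2
        - 2 * ((indicator Z z - e z) * e z) + 2 * ((indicator Z z - e' z) * e z))"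
    by (intro sum.cong refl) (simp add: power2_eq_square algebra_simps)
  also have "\<dots> = (\<Sum>z\<in>S. (e' z)\<^sup>2) - (\<Sum>z\<in>S. (e z)\<^sup>2)
        - 2 * (\<Sum>z\<in>S. (indicator Z z - e z) * e z) + 2 * (\<Sum>z\<in>S. (indicator Z z - e' z) * e z)"
    by (simp add: sum.distrib sum_subtractf sum_distrib_left)
  finally show ?thesis using orth orth' unfolding e_def e'_def by simp
qed

lemma sum_power2_ge_of_correlation:
  fixes f \<phi> :: "'a \<Rightarrow> real" and t :: real
  assumes A: "finite A" and bound: "\<And>z. z \<in> A \<Longrightarrow> \<bar>\<phi> z\<bar> \<le> 1" and t: "0 \<le> t"
    and corr: "card A * t \<le> (\<Sum>z\<in>A. f z * \<phi> z)"
  shows "card A * t\<^sup>2 \<le> (\<Sum>z\<in>A. (f z)\<^sup>2)"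
proof (cases "A = {}")
  case False
  define n where "n = real (card A)"
  have n: "0 < n" using A False by (simp add: n_def card_gt_0_iff)
  have "(n * t)\<^sup>2 \<le> (\<Sum>z\<in>A. f z * \<phi> z)\<^sup>2"
    using corr t n by (intro power_mono) (auto simp: n_def)
  also have "\<dots> \<le> (\<Sum>z\<in>A. (f z)\<^sup>2) * (\<Sum>z\<in>A. (\<phi> z)\<^sup>2)"
    by (rule Cauchy_Schwarz_ineq_sum)
  also have "\<dots> \<le> (\<Sum>z\<in>A. (f z)\<^sup>2) * n"
  proof (intro mult_left_mono sum_nonneg)
    have "(\<phi> z)\<^sup>2 \<le> 1" if "z \<in> A" for z
      using bound[OF that] abs_le_square_iff[of "\<phi> z" 1] by simp
    then show "(\<Sum>z\<in>A. (\<phi> z)\<^sup>2) \<le> n"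
      using sum_mono[of A "\<lambda>z. (\<phi> z)\<^sup>2" "\<lambda>_. 1"] by (simp add: n_def)
  qed simp
  finally have "n * (n * t\<^sup>2) \<le> n * (\<Sum>z\<in>A. (f z)\<^sup>2)"
    by (simp add: power2_eq_square algebra_simps)
  then show ?thesis using n by (simp add: n_def)
qed simp

lemma sum_power2_cond_exp_sub_ge:
  fixes \<phi> g :: "'a \<times> 'b \<Rightarrow> real" and t :: real
  assumes S: "finite S" and P: "partition_on S P" and c: "c \<subseteq> S"
    and const: "\<And>p z z'. p \<in> P \<Longrightarrow> z \<in> p \<Longrightarrow> z' \<in> p \<Longrightarrow> \<phi> z = \<phi> z'"
    and supp: "\<And>z. z \<in> S - c \<Longrightarrow> \<phi> z = 0"
    and bound: "\<And>z. z \<in> c \<Longrightarrow> \<bar>\<phi> z\<bar> \<le> 1" and t: "0 \<le> t"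
    and corr: "real (card c) * t \<le> (\<Sum>z\<in>c. (indicator Z z - g z) * \<phi> z)"
  shows "real (card c) * t\<^sup>2 \<le> (\<Sum>z\<in>c. (cond_exp Z P z - g z)\<^sup>2)"
proof (rule sum_power2_ge_of_correlation[OF finite_subset[OF c S] bound t])
  have "(\<Sum>z\<in>c. (indicator Z z - cond_exp Z P z) * \<phi> z)
      = (\<Sum>z\<in>S. (indicator Z z - cond_exp Z P z) * \<phi> z)"
    using supp by (intro sum.mono_neutral_left S c) auto
  also have "\<dots> = 0" by (rule sum_cond_exp_residual_eq_0[OF S P const])
  finally have orth: "(\<Sum>z\<in>c. (indicator Z z - cond_exp Z P z) * \<phi> z) = 0" .
  have "(\<Sum>z\<in>c. (cond_exp Z P z - g z) * \<phi> z)
      = (\<Sum>z\<in>c. (indicator Z z - g z) * \<phi> z) - (\<Sum>z\<in>c. (indicator Z z - cond_exp Z P z) * \<phi> z)"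
    unfolding sum_subtractf[symmetric] by (intro sum.cong refl) (simp add: algebra_simps)
  then show "real (card c) * t \<le> (\<Sum>z\<in>c. (cond_exp Z P z - g z) * \<phi> z)"
    using corr orth by simp
qed

lemma box_norm_ge_witness:
  fixes F :: "'a \<Rightarrow> 'b \<Rightarrow> real"
  assumes a: "finite a" "a \<noteq> {}" and b: "finite b" "b \<noteq> {}"
    and u: "0 < u" and bn: "u \<le> box_norm a b F"
  shows "\<exists>x0\<in>a. \<exists>y0\<in>b. real (card a) * real (card b) * u ^ 4
            \<le> (\<Sum>x\<in>a. \<Sum>y\<in>b. F x y * F x y0 * F x0 y * F x0 y0)"
proof (rule ccontr)
  define G where "G x x' y y' = F x y * F x y' * F x' y * F x' y'" for x x' y y'
  define N where "N = real (card a) ^ 2 * real (card b) ^ 2"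
  have N: "N > 0" unfolding N_def using a b by (simp add: card_gt_0_iff)
  have "root 4 (u ^ 4) \<le> root 4 ((\<Sum>x\<in>a. \<Sum>x'\<in>a. \<Sum>y\<in>b. \<Sum>y'\<in>b. G x x' y y') / N)"
    using bn u unfolding box_norm_def G_def N_def by (simp add: real_root_power_cancel)
  then have "N * u ^ 4 \<le> (\<Sum>x\<in>a. \<Sum>x'\<in>a. \<Sum>y\<in>b. \<Sum>y'\<in>b. G x x' y y')"
    using N by (simp add: pos_le_divide_eq mult.commute)
  also have "\<dots> = (\<Sum>x'\<in>a. \<Sum>y'\<in>b. \<Sum>x\<in>a. \<Sum>y\<in>b. G x x' y y')"
    by (subst sum.swap) (intro sum.cong refl, subst sum.swap, rule sum.cong[OF refl sum.swap])
  finally have total: "N * u ^ 4 \<le> (\<Sum>x'\<in>a. \<Sum>y'\<in>b. \<Sum>x\<in>a. \<Sum>y\<in>b. G x x' y y')" .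
  assume "\<not> ?thesis"
  then have "(\<Sum>x\<in>a. \<Sum>y\<in>b. G x x' y y') < real (card a) * real (card b) * u ^ 4"
    if "x' \<in> a" "y' \<in> b" for x' y'
    using that unfolding G_def by (auto simp: not_le)
  then have "(\<Sum>x'\<in>a. \<Sum>y'\<in>b. \<Sum>x\<in>a. \<Sum>y\<in>b. G x x' y y')
      < (\<Sum>x'\<in>a. \<Sum>y'\<in>b. real (card a) * real (card b) * u ^ 4)"
    using a b by (intro sum_strict_mono) (auto intro!: sum_strict_mono)
  also have "\<dots> = N * u ^ 4" unfolding N_def by (simp add: power2_eq_square)
  finally show False using total by simp
qed

definition level_refinement :: "'a set set \<Rightarrow> ('a set \<Rightarrow> 'a \<Rightarrow> 'c) \<Rightarrow> 'a set set" where
  "level_refinement P s = {{x' \<in> a. s a x' = s a x} | a x. a \<in> P \<and> x \<in> a}"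

lemma level_refinement_eq_level_set:
  assumes "partition_on X P" "q \<in> level_refinement P s" "a \<in> P" "x \<in> q" "x \<in> a"
  shows "q = {x' \<in> a. s a x' = s a x}"
proof -
  obtain a0 x0 where q: "q = {x' \<in> a0. s a0 x' = s a0 x0}" "a0 \<in> P" "x0 \<in> a0"
    using assms(2) unfolding level_refinement_def by blast
  have "x \<in> a0 \<inter> a" using q(1) assms(4,5) by blast
  then have "a0 = a" using disjointD[OF partition_onD2[OF assms(1)] q(2) assms(3)] by blast
  then show ?thesis using q(1) assms(4) by auto
qed

lemma partition_refines_level_refinement:
  assumes P: "partition_on X P"
  shows "Disjoint_Sets.refines X (level_refinement P s) P"
  unfolding Disjoint_Sets.refines_def
proof (intro conjI P)
  show "\<forall>q\<in>level_refinement P s. \<exists>a\<in>P. q \<subseteq> a"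
    unfolding level_refinement_def by blast
  show "partition_on X (level_refinement P s)"
  proof (rule partition_onI)
    show "\<Union>(level_refinement P s) = X"
      using partition_onD1[OF P] unfolding level_refinement_def by blast
    show "{} \<notin> level_refinement P s" unfolding level_refinement_def by blast
  next
    fix q q' assume q: "q \<in> level_refinement P s" "q' \<in> level_refinement P s" "q \<noteq> q'"
    show "disjnt q q'"
    proof (rule ccontr)
      assume "\<not> disjnt q q'"
      then obtain x where x: "x \<in> q" "x \<in> q'" by (auto simp: disjnt_def)
      obtain a where "a \<in> P" "x \<in> a" using x(1) partition_onD1[OF P] q(1)
        unfolding level_refinement_def by blast
      then show False
        using level_refinement_eq_level_set[OF P q(1)] level_refinement_eq_level_set[OF P q(2)] x q(3) by metis
    qed
  qed
qed

lemma level_refinement_label_eq: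
  assumes "partition_on X P" "q \<in> level_refinement P s" "x \<in> q" "x' \<in> q" "a \<in> P" "x \<in> a"
  shows "s a x' = s a x"
  using level_refinement_eq_level_set[OF assms(1,2,5,3,6)] assms(4) by blast

lemma multi_level_refinement_le:
  assumes P: "partition_on X P" "finite P" "P \<noteq> {}"
    and L: "\<And>a x. a \<in> P \<Longrightarrow> x \<in> a \<Longrightarrow> s a x \<in> L" "finite L"
  shows "multi (level_refinement P s) P \<le> card L"
  unfolding multi_def
proof (rule Max.boundedI)
  show "finite ((\<lambda>p. card {q \<in> level_refinement P s. q \<subseteq> p}) ` P)" using P(2) by simp
  show "(\<lambda>p. card {q \<in> level_refinement P s. q \<subseteq> p}) ` P \<noteq> {}" using P(3) by simp
next
  fix m assume "m \<in> (\<lambda>p. card {q \<in> level_refinement P s. q \<subseteq> p}) ` P"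
  then obtain p where p: "p \<in> P" "m = card {q \<in> level_refinement P s. q \<subseteq> p}" by blast
  have "{q \<in> level_refinement P s. q \<subseteq> p} \<subseteq> (\<lambda>l. {x \<in> p. s p x = l}) ` L"
  proof
    fix q assume q: "q \<in> {q \<in> level_refinement P s. q \<subseteq> p}"
    then obtain x where "x \<in> q" unfolding level_refinement_def by blast
    with q have "x \<in> p" "q = {x' \<in> p. s p x' = s p x}"
      using level_refinement_eq_level_set[OF P(1) _ p(1)] by blast+
    then show "q \<in> (\<lambda>l. {x \<in> p. s p x = l}) ` L" using L(1)[OF p(1)] by blast
  qed
  then have "m \<le> card ((\<lambda>l. {x \<in> p. s p x = l}) ` L)"
    unfolding p(2) using L(2) by (intro card_mono) auto
  also have "\<dots> \<le> card L" by (rule card_image_le[OF L(2)])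
  finally show "m \<le> card L" .
qed

lemma card_Union_mult_le_sum:
  fixes h :: "'a \<Rightarrow> real"
  assumes S: "finite S" and P: "partition_on S P" and E: "E \<subseteq> P"
    and h: "\<And>z. z \<in> S \<Longrightarrow> 0 \<le> h z" and big: "\<And>p. p \<in> E \<Longrightarrow> real (card p) * \<kappa> \<le> (\<Sum>z\<in>p. h z)"
  shows "real (card (\<Union>E)) * \<kappa> \<le> (\<Sum>z\<in>S. h z)"
proof -
  have finP: "finite P" by (rule finite_elements[OF S P])
  have fin: "\<And>p. p \<in> P \<Longrightarrow> finite p" by (rule partition_on_finite_atom[OF S P])
  have "card (\<Union>E) = (\<Sum>p\<in>E. card p)"
    using pairwise_subset[OF partition_onD2[OF P] E] fin E by (intro card_Union_disjoint) auto
  then have "real (card (\<Union>E)) * \<kappa> = (\<Sum>p\<in>E. real (card p) * \<kappa>)"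
    by (simp add: sum_distrib_right)
  also have "\<dots> \<le> (\<Sum>p\<in>E. \<Sum>z\<in>p. h z)" using big by (rule sum_mono)
  also have "\<dots> \<le> (\<Sum>p\<in>P. \<Sum>z\<in>p. h z)"
    using finP E h partition_onD1[OF P] by (intro sum_mono2 sum_nonneg) auto
  also have "\<dots> = (\<Sum>z\<in>S. h z)" by (rule sum.partition[OF S P, symmetric])
  finally show ?thesis .
qed

lemma indicator_mult_eq_on_refinement:
  assumes ref: "Disjoint_Sets.refines A P' P" and p: "p \<in> P" and q: "q \<in> P'" "x \<in> q" "x' \<in> q"
    and f: "x \<in> p \<Longrightarrow> f x = f x'"
  shows "indicator p x * f x = indicator p x' * (f x' :: real)"
proof (cases "x \<in> p")
  case True
  then show ?thesis using partition_refines_mem[OF ref q p True] f by simp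
next
  case False
  then have "x' \<notin> p" using partition_refines_mem[OF ref q(1,3,2) p] by blast
  with False show ?thesis by simp
qed

lemma energy_increment_on_cell:
  fixes Z :: "('a \<times> 'b) set" and a :: "'a set" and b :: "'b set" and u :: real
  defines "F \<equiv> \<lambda>x y. indicator Z (x, y) - rel_prob Z (a \<times> b)"
  assumes X: "finite X" and Y: "finite Y"
    and refX: "Disjoint_Sets.refines X PX' PX" and refY: "Disjoint_Sets.refines Y PY' PY"
    and ab: "a \<in> PX" "b \<in> PY"
    and labelX: "\<And>q x x'. q \<in> PX' \<Longrightarrow> x \<in> q \<Longrightarrow> x' \<in> q \<Longrightarrow> x \<in> a \<Longrightarrow> (x, y0) \<in> Z \<longleftrightarrow> (x', y0) \<in> Z"
    and labelY: "\<And>r y y'. r \<in> PY' \<Longrightarrow> y \<in> r \<Longrightarrow> y' \<in> r \<Longrightarrow> y \<in> b \<Longrightarrow> (x0, y) \<in> Z \<longleftrightarrow> (x0, y') \<in> Z"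
    and corr: "real (card a) * real (card b) * u ^ 4
                 \<le> (\<Sum>x\<in>a. \<Sum>y\<in>b. F x y * F x y0 * F x0 y * F x0 y0)"
  shows "real (card a) * real (card b) * u ^ 8
           \<le> (\<Sum>z\<in>a \<times> b. (cond_exp Z (prod_part PX' PY') z - cond_exp Z (prod_part PX PY) z)\<^sup>2)"
proof -
  have pX: "partition_on X PX" and pX': "partition_on X PX'"
    and pY: "partition_on Y PY" and pY': "partition_on Y PY'"
    using refX refY unfolding Disjoint_Sets.refines_def by auto
  have ab_sub: "a \<times> b \<subseteq> X \<times> Y" using ab partition_onD1[OF pX] partition_onD1[OF pY] by blast
  have F_bound: "\<bar>F x y\<bar> \<le> 1" for x y
    using rel_prob_nonneg[of Z "a \<times> b"] rel_prob_le_1[of "a \<times> b" Z] finite_subset[OF ab_sub] X Y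
    unfolding F_def by (auto simp: indicator_def)
  define \<phi> where "\<phi> = (\<lambda>(x, y). (indicator a x * F x y0) * (indicator b y * F x0 y) * F x0 y0)"
  have \<phi>_const: "\<phi> z = \<phi> z'" if c: "c \<in> prod_part PX' PY'" "z \<in> c" "z' \<in> c" for c z z'
  proof -
    obtain q r where qr: "c = q \<times> r" "q \<in> PX'" "r \<in> PY'" using c(1) unfolding prod_part_def by blast
    obtain x y x' y' where xy: "z = (x, y)" "z' = (x', y')" "x \<in> q" "x' \<in> q" "y \<in> r" "y' \<in> r"
      using c(2,3) unfolding qr(1) by (metis mem_Times_iff prod.collapse)
    have "indicator a x * F x y0 = indicator a x' * F x' y0"
      using labelX[OF qr(2) xy(3,4)] unfolding F_def
      by (intro indicator_mult_eq_on_refinement[OF refX ab(1) qr(2) xy(3,4)]) (simp add: indicator_def)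
    moreover have "indicator b y * F x0 y = indicator b y' * F x0 y'"
      using labelY[OF qr(3) xy(5,6)] unfolding F_def
      by (intro indicator_mult_eq_on_refinement[OF refY ab(2) qr(3) xy(5,6)]) (simp add: indicator_def)
    ultimately show ?thesis unfolding \<phi>_def xy(1,2) by simp
  qed
  have \<phi>_supp: "\<phi> z = 0" if "z \<in> X \<times> Y - a \<times> b" for z
    using that unfolding \<phi>_def by (auto simp: indicator_def)
  have \<phi>_bound: "\<bar>\<phi> z\<bar> \<le> 1" for z
    using F_bound unfolding \<phi>_def
    by (auto simp: abs_mult indicator_def intro!: mult_le_one split: prod.split)
  have "a \<times> b \<in> prod_part PX PY" using ab unfolding prod_part_def by blast
  then have residual: "indicator Z (x, y) - cond_exp Z (prod_part PX PY) (x, y) = F x y"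
    if "(x, y) \<in> a \<times> b" for x y
    using cond_exp_eq_rel_prob[OF _ partition_on_prod_part[OF pX pY]] X Y that unfolding F_def by simp
  have "(\<Sum>z\<in>a \<times> b. (indicator Z z - cond_exp Z (prod_part PX PY) z) * \<phi> z)
      = (\<Sum>x\<in>a. \<Sum>y\<in>b. F x y * F x y0 * F x0 y * F x0 y0)"
    unfolding sum.cartesian_product
    by (intro sum.cong refl) (auto simp: residual \<phi>_def mult_ac)
  then have "real (card (a \<times> b)) * (u ^ 4)\<^sup>2
      \<le> (\<Sum>z\<in>a \<times> b. (cond_exp Z (prod_part PX' PY') z - cond_exp Z (prod_part PX PY) z)\<^sup>2)"
    using corr \<phi>_bound
    by (intro sum_power2_cond_exp_sub_ge[OF _ partition_on_prod_part[OF pX' pY'] ab_sub \<phi>_const \<phi>_supp])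
       (auto simp: X Y card_cartesian_product)
  then show ?thesis by (simp add: card_cartesian_product flip: power_mult)
qed

lemma box_norm_witnesses:
  fixes F :: "'a set \<Rightarrow> 'b set \<Rightarrow> 'a \<Rightarrow> 'b \<Rightarrow> real"
  assumes X: "finite X" and Y: "finite Y" and pX: "partition_on X PX" and pY: "partition_on Y PY"
    and u: "0 < u"
  obtains x0 y0 where
    "\<And>a b. a \<in> PX \<Longrightarrow> b \<in> PY \<Longrightarrow> u \<le> box_norm a b (F a b) \<Longrightarrow>
       real (card a) * real (card b) * u ^ 4
         \<le> (\<Sum>x\<in>a. \<Sum>y\<in>b. F a b x y * F a b x (y0 a b) * F a b (x0 a b) y * F a b (x0 a b) (y0 a b))"
proof -
  define witness where "witness a b x0 y0 \<longleftrightarrow> (u \<le> box_norm a b (F a b) \<longrightarrow>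
      real (card a) * real (card b) * u ^ 4
        \<le> (\<Sum>x\<in>a. \<Sum>y\<in>b. F a b x y * F a b x y0 * F a b x0 y * F a b x0 y0))" for a b x0 y0
  have "\<exists>w. witness a b (fst w) (snd w)" if ab: "a \<in> PX" "b \<in> PY" for a b
  proof -
    have "finite a" "a \<noteq> {}" "finite b" "b \<noteq> {}"
      using partition_on_finite_atom[OF X pX ab(1)] partition_on_finite_atom[OF Y pY ab(2)]
        partition_onD3[OF pX] partition_onD3[OF pY] ab by auto
    then show ?thesis
      using box_norm_ge_witness[OF _ _ _ _ u, of a b "F a b"] unfolding witness_def by fastforce
  qed
  then obtain w where "\<And>a b. a \<in> PX \<Longrightarrow> b \<in> PY \<Longrightarrow> witness a b (fst (w a b)) (snd (w a b))"
    by metis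
  \<comment> \<open>\<open>that\<close> quantifies \<open>y0\<close> before \<open>x0\<close>, the order of their first occurrence\<close>
  then show ?thesis
    by (intro that[of "\<lambda>a b. snd (w a b)" "\<lambda>a b. fst (w a b)"]) (simp add: witness_def)
qed

lemma refinement_by_witness_labels:
  fixes Z :: "('a \<times> 'b) set" and wx :: "'a set \<Rightarrow> 'b set \<Rightarrow> 'a" and wy :: "'a set \<Rightarrow> 'b set \<Rightarrow> 'b"
  assumes X: "finite X" and Y: "finite Y" and pX: "partition_on X PX" and pY: "partition_on Y PY"
    and nonempty: "PX \<noteq> {}" "PY \<noteq> {}"
  obtains PX' PY' where "Disjoint_Sets.refines X PX' PX" "Disjoint_Sets.refines Y PY' PY"
    "multi PX' PX \<le> 2 ^ card PY" "multi PY' PY \<le> 2 ^ card PX"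
    "\<And>a b q x x'. a \<in> PX \<Longrightarrow> b \<in> PY \<Longrightarrow> q \<in> PX' \<Longrightarrow> x \<in> q \<Longrightarrow> x' \<in> q \<Longrightarrow> x \<in> a \<Longrightarrow>
       (x, wy a b) \<in> Z \<longleftrightarrow> (x', wy a b) \<in> Z"
    "\<And>a b r y y'. a \<in> PX \<Longrightarrow> b \<in> PY \<Longrightarrow> r \<in> PY' \<Longrightarrow> y \<in> r \<Longrightarrow> y' \<in> r \<Longrightarrow> y \<in> b \<Longrightarrow>
       (wx a b, y) \<in> Z \<longleftrightarrow> (wx a b, y') \<in> Z"
proof
  define sx where "sx a x = {b \<in> PY. (x, wy a b) \<in> Z}" for a x
  define sy where "sy b y = {a \<in> PX. (wx a b, y) \<in> Z}" for b y
  show "Disjoint_Sets.refines X (level_refinement PX sx) PX"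
    "Disjoint_Sets.refines Y (level_refinement PY sy) PY"
    using partition_refines_level_refinement[OF pX] partition_refines_level_refinement[OF pY] by blast+
  show "multi (level_refinement PX sx) PX \<le> 2 ^ card PY"
    using multi_level_refinement_le[OF pX finite_elements[OF X pX] nonempty(1), of sx "Pow PY"]
    unfolding sx_def by (simp add: finite_elements[OF Y pY] card_Pow)
  show "multi (level_refinement PY sy) PY \<le> 2 ^ card PX"
    using multi_level_refinement_le[OF pY finite_elements[OF Y pY] nonempty(2), of sy "Pow PX"]
    unfolding sy_def by (simp add: finite_elements[OF X pX] card_Pow)
  show "(x, wy a b) \<in> Z \<longleftrightarrow> (x', wy a b) \<in> Z"
    if "a \<in> PX" "b \<in> PY" "q \<in> level_refinement PX sx" "x \<in> q" "x' \<in> q" "x \<in> a" for a b q x x'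
    using level_refinement_label_eq[OF pX that(3-5,1,6)] that(2) unfolding sx_def by blast
  show "(wx a b, y) \<in> Z \<longleftrightarrow> (wx a b, y') \<in> Z"
    if "a \<in> PX" "b \<in> PY" "r \<in> level_refinement PY sy" "y \<in> r" "y' \<in> r" "y \<in> b" for a b r y y'
    using level_refinement_label_eq[OF pY that(3-5,2,6)] that(1) unfolding sy_def by blast
qed

lemma energy_increment:
  fixes X :: "'a set" and Y :: "'b set" and Z :: "('a \<times> 'b) set" and u \<tau> :: real
  assumes u: "0 < u" and \<tau>: "0 < \<tau>" and X: "finite X" and Y: "finite Y"
    and pX: "partition_on X PX" and pY: "partition_on Y PY"
    and dense: "\<tau> \<le> rel_prob (\<Union>{px \<times> py | px py. px \<in> PX \<and> py \<in> PY \<and>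
                   u \<le> box_norm px py (\<lambda>x y. indicator Z (x, y) - rel_prob Z (px \<times> py))})
                (X \<times> Y)"
  shows "\<exists>PX' PY'. partition_on X PX' \<and> partition_on Y PY' \<and>
          refines (prod_part PX' PY') (prod_part PX PY) \<and>
          uexp (X \<times> Y) (\<lambda>z. (cond_exp Z (prod_part PX' PY') z)\<^sup>2)
            \<ge> uexp (X \<times> Y) (\<lambda>z. (cond_exp Z (prod_part PX PY) z)\<^sup>2) + \<tau> * u ^ 8 \<and>
          multi PX' PX \<le> 2 ^ card PY \<and> multi PY' PY \<le> 2 ^ card PX"
proof -
  define F where "F a b x y = indicator Z (x, y) - rel_prob Z (a \<times> b)" for a b x y
  define E where "E = {a \<times> b | a b. a \<in> PX \<and> b \<in> PY \<and> u \<le> box_norm a b (F a b)}"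
  have XY: "finite (X \<times> Y)" using X Y by simp
  have pXY: "partition_on (X \<times> Y) (prod_part PX PY)" by (rule partition_on_prod_part[OF pX pY])
  have E_sub: "E \<subseteq> prod_part PX PY" unfolding E_def prod_part_def by blast
  have "\<Union>E \<subseteq> X \<times> Y" using E_sub partition_onD1[OF pXY] by blast
  moreover have "\<tau> \<le> rel_prob (\<Union>E) (X \<times> Y)" using dense unfolding E_def F_def by simp
  ultimately have N: "0 < card (X \<times> Y)" and UE: "\<tau> * real (card (X \<times> Y)) \<le> real (card (\<Union>E))"
    using card_ge_of_rel_prob_ge[OF \<tau>] by blast+
  have nonempty: "PX \<noteq> {}" "PY \<noteq> {}"
    using N partition_onD1[OF pX] partition_onD1[OF pY] by auto
  obtain x0 y0 where w: "\<And>a b. a \<in> PX \<Longrightarrow> b \<in> PY \<Longrightarrow> u \<le> box_norm a b (F a b) \<Longrightarrow>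
       real (card a) * real (card b) * u ^ 4
         \<le> (\<Sum>x\<in>a. \<Sum>y\<in>b. F a b x y * F a b x (y0 a b) * F a b (x0 a b) y * F a b (x0 a b) (y0 a b))"
    by (rule box_norm_witnesses[OF X Y pX pY u, where F = F]) blast
  obtain PX' PY' where refX: "Disjoint_Sets.refines X PX' PX" and refY: "Disjoint_Sets.refines Y PY' PY"
    and multi: "multi PX' PX \<le> 2 ^ card PY" "multi PY' PY \<le> 2 ^ card PX"
    and labels: "\<And>a b q x x'. a \<in> PX \<Longrightarrow> b \<in> PY \<Longrightarrow> q \<in> PX' \<Longrightarrow> x \<in> q \<Longrightarrow> x' \<in> q \<Longrightarrow> x \<in> a \<Longrightarrow>
       (x, y0 a b) \<in> Z \<longleftrightarrow> (x', y0 a b) \<in> Z"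
      "\<And>a b r y y'. a \<in> PX \<Longrightarrow> b \<in> PY \<Longrightarrow> r \<in> PY' \<Longrightarrow> y \<in> r \<Longrightarrow> y' \<in> r \<Longrightarrow> y \<in> b \<Longrightarrow>
       (x0 a b, y) \<in> Z \<longleftrightarrow> (x0 a b, y') \<in> Z"
    by (rule refinement_by_witness_labels[OF X Y pX pY nonempty, where Z = Z and wx = x0 and wy = y0]) blast
  have refXY: "Disjoint_Sets.refines (X \<times> Y) (prod_part PX' PY') (prod_part PX PY)"
    by (rule partition_refines_prod_part[OF refX refY])
  define e where "e = cond_exp Z (prod_part PX PY)"
  define e' where "e' = cond_exp Z (prod_part PX' PY')"
  have cells: "real (card p) * u ^ 8 \<le> (\<Sum>z\<in>p. (e' z - e z)\<^sup>2)" if "p \<in> E" for p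
  proof -
    obtain a b where p: "p = a \<times> b" "a \<in> PX" "b \<in> PY" "u \<le> box_norm a b (F a b)"
      using \<open>p \<in> E\<close> unfolding E_def by blast
    show ?thesis
      using energy_increment_on_cell[OF X Y refX refY p(2,3) labels(1)[OF p(2,3)] labels(2)[OF p(2,3)]]
        w[OF p(2-4)]
      unfolding p(1) e_def e'_def F_def by (simp add: card_cartesian_product)
  qed
  have "\<tau> * real (card (X \<times> Y)) * u ^ 8 \<le> real (card (\<Union>E)) * u ^ 8"
    using UE by (simp add: mult_right_mono)
  also have "\<dots> \<le> (\<Sum>z\<in>X \<times> Y. (e' z - e z)\<^sup>2)"
    by (rule card_Union_mult_le_sum[OF XY pXY E_sub _ cells]) simp
  finally have "\<tau> * u ^ 8 \<le> uexp (X \<times> Y) (\<lambda>z. (e' z - e z)\<^sup>2)"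
    using N unfolding uexp_def by (simp add: pos_le_divide_eq mult_ac)
  moreover have "uexp (X \<times> Y) (\<lambda>z. (e' z)\<^sup>2)
      = uexp (X \<times> Y) (\<lambda>z. (e z)\<^sup>2) + uexp (X \<times> Y) (\<lambda>z. (e' z - e z)\<^sup>2)"
    using cond_exp_pythagoras[OF XY refXY] unfolding uexp_def e_def e'_def by (simp add: add_divide_distrib)
  ultimately have "uexp (X \<times> Y) (\<lambda>z. (e z)\<^sup>2) + \<tau> * u ^ 8 \<le> uexp (X \<times> Y) (\<lambda>z. (e' z)\<^sup>2)"
    by linarith
  moreover have "partition_on X PX'" "partition_on Y PY'"
    using refX refY unfolding Disjoint_Sets.refines_def by blast+
  ultimately show ?thesis
    using refines_if_partition_refines[OF refXY] multi unfolding e_def e'_def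
    by (intro exI[of _ PX'] exI[of _ PY']) simp
qed

theorem proposition9p14:
  shows "\<exists>C2::real. C2 > 0 \<and>
    (\<forall>u \<tau> :: real. 0 < u \<and> u < 1 \<and> 0 < \<tau> \<and> \<tau> < 1 \<longrightarrow>
    (\<forall>(X::nat set) (Y::nat set) (Z::(nat \<times> nat) set) PX PY.
       finite X \<and> finite Y \<and> Z \<subseteq> X \<times> Y \<and> partition_on X PX \<and> partition_on Y PY \<and>
       rel_prob (\<Union>{px \<times> py | px py. px \<in> PX \<and> py \<in> PY \<and>
                   box_norm px py (\<lambda>x y. indicator Z (x, y) - rel_prob Z (px \<times> py)) \<ge> u})
                (X \<times> Y) \<ge> \<tau>
       \<longrightarrow>
       (\<exists>PX' PY'. partition_on X PX' \<and> partition_on Y PY' \<and>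
          refines (prod_part PX' PY') (prod_part PX PY) \<and>
          uexp (X \<times> Y) (\<lambda>z. (cond_exp Z (prod_part PX' PY') z)\<^sup>2)
            \<ge> uexp (X \<times> Y) (\<lambda>z. (cond_exp Z (prod_part PX PY) z)\<^sup>2) + \<tau> * u powr C2 \<and>
          multi PX' PX \<le> 2 ^ card PY \<and> multi PY' PY \<le> 2 ^ card PX)))"
proof (intro exI[of _ "8::real"] conjI allI impI)
  fix u \<tau> :: real and X Y :: "nat set" and Z :: "(nat \<times> nat) set" and PX PY
  assume "0 < u \<and> u < 1 \<and> 0 < \<tau> \<and> \<tau> < 1"
    and "finite X \<and> finite Y \<and> Z \<subseteq> X \<times> Y \<and> partition_on X PX \<and> partition_on Y PY \<and>
       rel_prob (\<Union>{px \<times> py | px py. px \<in> PX \<and> py \<in> PY \<and>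
                   box_norm px py (\<lambda>x y. indicator Z (x, y) - rel_prob Z (px \<times> py)) \<ge> u})
                (X \<times> Y) \<ge> \<tau>"
  then show "\<exists>PX' PY'. partition_on X PX' \<and> partition_on Y PY' \<and>
          refines (prod_part PX' PY') (prod_part PX PY) \<and>
          uexp (X \<times> Y) (\<lambda>z. (cond_exp Z (prod_part PX' PY') z)\<^sup>2)
            \<ge> uexp (X \<times> Y) (\<lambda>z. (cond_exp Z (prod_part PX PY) z)\<^sup>2) + \<tau> * u powr 8 \<and>
          multi PX' PX \<le> 2 ^ card PY \<and> multi PY' PY \<le> 2 ^ card PX"
    using energy_increment[of u \<tau> X Y PX PY Z] by simp
qed simp

end
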